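(* Let $\lambda$ be a cardinal and assume $MA_\lambda(K)$. Then for every natural number $k$ and every $(k+1,\omega)$-almost disjoint family $\mathcal A$ of finite subsets of $\lambda$ such that $|A|>2k$ for all $A\in\mathcal A$, we have $\chi_{\rm CF}(\mathcal A)\le\omega$.
   Context: $MA_\lambda(K)$ is Martin's Axiom for $\lambda$ dense sets restricted to partial orders with property K (every uncountable set of conditions has an uncountable subset of pairwise compatible conditions). A family $\mathcal A$ is $(\mu,\nu)$-almost disjoint if $|\bigcap\mathcal B|<\mu$ for every $\mathcal B\subseteq\mathcal A$ with $|\mathcal B|=\nu$. A conflict free coloring of $\mathcal A$ with $\rho$ colors is $f:\bigcup\mathcal A\to\rho$ such that every $A\in\mathcal A$ has some $\zeta$ with $|A\cap f^{-1}\{\zeta\}|=1$; $\chi_{\rm CF}(\mathcal A)$ is the least such $\rho$. *)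

theory Defs
  imports Main "HOL-Library.Countable_Set" "HOL-Library.Equipollence"
begin

definition partial_order_on' :: "'p set \<Rightarrow> ('p \<Rightarrow> 'p \<Rightarrow> bool) \<Rightarrow> bool" where
  "partial_order_on' P le \<longleftrightarrow>
     (\<forall>p\<in>P. le p p) \<and>
     (\<forall>p\<in>P. \<forall>q\<in>P. \<forall>r\<in>P. le p q \<longrightarrow> le q r \<longrightarrow> le p r) \<and>
     (\<forall>p\<in>P. \<forall>q\<in>P. le p q \<longrightarrow> le q p \<longrightarrow> p = q)"

definition compatible :: "'p set \<Rightarrow> ('p \<Rightarrow> 'p \<Rightarrow> bool) \<Rightarrow> 'p \<Rightarrow> 'p \<Rightarrow> bool" where
  "compatible P le p q \<longleftrightarrow> (\<exists>r\<in>P. le r p \<and> le r q)"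

definition property_K :: "'p set \<Rightarrow> ('p \<Rightarrow> 'p \<Rightarrow> bool) \<Rightarrow> bool" where
  "property_K P le \<longleftrightarrow>
     (\<forall>S\<subseteq>P. uncountable S \<longrightarrow>
        (\<exists>T\<subseteq>S. uncountable T \<and> (\<forall>p\<in>T. \<forall>q\<in>T. compatible P le p q)))"

definition dense_in :: "'p set \<Rightarrow> ('p \<Rightarrow> 'p \<Rightarrow> bool) \<Rightarrow> 'p set \<Rightarrow> bool" where
  "dense_in P le D \<longleftrightarrow> D \<subseteq> P \<and> (\<forall>p\<in>P. \<exists>d\<in>D. le d p)"

definition filter_in :: "'p set \<Rightarrow> ('p \<Rightarrow> 'p \<Rightarrow> bool) \<Rightarrow> 'p set \<Rightarrow> bool" where
  "filter_in P le G \<longleftrightarrow> G \<subseteq> P \<and> G \<noteq> {} \<and>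
     (\<forall>p\<in>G. \<forall>q\<in>P. le p q \<longrightarrow> q \<in> G) \<and>
     (\<forall>p\<in>G. \<forall>q\<in>G. \<exists>r\<in>G. le r p \<and> le r q)"

text \<open>MA_lambda(K), with the cardinal lambda given as the cardinality of a set L,
  for (nonempty) partial orders whose conditions live in the type 'p.\<close>
definition MA_K :: "'p itself \<Rightarrow> 'l set \<Rightarrow> bool" where
  "MA_K (_::'p itself) L \<longleftrightarrow>
     (\<forall>(P::'p set) le. P \<noteq> {} \<and> partial_order_on' P le \<and> property_K P le \<longrightarrow>
        (\<forall>\<D>. \<D> \<lesssim> L \<and> (\<forall>D\<in>\<D>. dense_in P le D) \<longrightarrow>
           (\<exists>G. filter_in P le G \<and> (\<forall>D\<in>\<D>. G \<inter> D \<noteq> {}))))"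

text \<open>(mu,nu)-almost disjoint, for a finite mu (a natural number) and nu
  given as the cardinality of a set N.\<close>
definition almost_disjoint :: "nat \<Rightarrow> 'n set \<Rightarrow> 'a set set \<Rightarrow> bool" where
  "almost_disjoint \<mu> N \<A> \<longleftrightarrow>
     (\<forall>\<B>\<subseteq>\<A>. \<B> \<approx> N \<longrightarrow> finite (\<Inter>\<B>) \<and> card (\<Inter>\<B>) < \<mu>)"

definition cf_coloring :: "'a set set \<Rightarrow> ('a \<Rightarrow> 'c) \<Rightarrow> 'c set \<Rightarrow> bool" where
  "cf_coloring \<A> f \<rho> \<longleftrightarrow> f ` (\<Union>\<A>) \<subseteq> \<rho> \<and>
     (\<forall>A\<in>\<A>. \<exists>\<zeta>. card (A \<inter> f -` {\<zeta>}) = 1)"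

text \<open>chi_CF(A) <= |rho|\<close>
definition cf_colorable :: "'a set set \<Rightarrow> 'c set \<Rightarrow> bool" where
  "cf_colorable \<A> \<rho> \<longleftrightarrow> (\<exists>f. cf_coloring \<A> f \<rho>)"

end

theory Submission
  imports Defs
begin

text \<open>
  Force with finite partial colorings \<open>p\<close> of \<open>X\<close> in which every \<open>A \<in> \<A>\<close> already covered by
  \<open>Domain p\<close> has a color occurring exactly once on it.  Extending by a fresh color shows that
  each \<open>x \<in> X\<close> enters the domain densely often, so a filter meeting these \<open>|X|\<close> dense sets glues
  to a total conflict free coloring with countably many colors.

  For property K, enlarge \<open>Domain p\<close> to its heavy hull: add every \<open>A \<in> \<A>\<close> meeting it in more
  than \<open>k\<close> points.  Only finitely many \<open>A\<close> contain a given \<open>(k+1)\<close>-set, so the hull is finite.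
  By the \<open>\<Delta>\<close>-system lemma and pigeonhole, an uncountable set of conditions contains an
  uncountable subset whose hulls form a \<open>\<Delta>\<close>-system with root \<open>R\<close> and which agree on \<open>R\<close>.  Two
  such conditions are compatible: if \<open>A \<subseteq> Domain p \<union> Domain q\<close>, then since \<open>|A| > 2k\<close> it
  meets one domain, say \<open>Domain p\<close>, in more than \<open>k\<close> points; so \<open>A\<close> lies in the hull of \<open>p\<close>,
  points of \<open>A\<close> colored by \<open>q\<close> lie in \<open>R\<close> where \<open>p\<close> and \<open>q\<close> agree, and the unique color of \<open>A\<close>
  in \<open>p\<close> stays unique in \<open>p \<union> q\<close>.
\<close>

section \<open>The \<open>\<Delta>\<close>-system lemma\<close>

definition delta_system :: "'a set set \<Rightarrow> 'a set \<Rightarrow> bool" where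
  "delta_system G R \<longleftrightarrow> (\<forall>a\<in>G. \<forall>b\<in>G. a \<noteq> b \<longrightarrow> a \<inter> b = R)"

lemma uncountable_fiber:
  assumes "uncountable S" "countable (f ` S)"
  shows "\<exists>c. uncountable {s\<in>S. f s = c}"
proof (rule ccontr)
  assume "\<nexists>c. uncountable {s\<in>S. f s = c}"
  then have "countable (\<Union>c\<in>f ` S. {s\<in>S. f s = c})"
    using assms(2) by (intro countable_UN) auto
  moreover have "(\<Union>c\<in>f ` S. {s\<in>S. f s = c}) = S" by auto
  ultimately show False using assms(1) by simp
qed

lemma uncountable_disjoint_subfamily:
  assumes unc: "uncountable F" and ne: "\<forall>a\<in>F. finite a \<and> a \<noteq> {}"
    and few: "\<forall>x. countable {a\<in>F. x \<in> a}"
  shows "\<exists>G\<subseteq>F. uncountable G \<and> pairwise disjnt G"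
proof -
  let ?D = "{G. G \<subseteq> F \<and> pairwise disjnt G}"
  have "\<forall>C\<in>chains ?D. \<Union>C \<in> ?D"
  proof
    fix C assume "C \<in> chains ?D"
    then have "C \<subseteq> ?D" "chain\<^sub>\<subseteq> C" by (simp_all add: chains_def)
    then show "\<Union>C \<in> ?D" using pairwise_chain_Union[of C disjnt] by auto
  qed
  from Zorn_Lemma[OF this] obtain M where M: "M \<in> ?D" and max: "\<forall>G\<in>?D. M \<subseteq> G \<longrightarrow> G = M"
    by blast
  have "uncountable M"
  proof
    assume "countable M"
    moreover have "countable a" if "a \<in> M" for a
      using that M ne by (auto intro: countable_finite)
    ultimately have "countable (\<Union>a\<in>M. a)" by (rule countable_UN)
    then have "countable (\<Union>M)" by simp
    then have "countable (\<Union>x\<in>\<Union>M. {a\<in>F. x \<in> a})"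
      using few by (intro countable_UN) auto
    then have "\<not> F \<subseteq> (\<Union>x\<in>\<Union>M. {a\<in>F. x \<in> a})"
      using unc countable_subset by blast
    then obtain a where a: "a \<in> F" "a \<notin> (\<Union>x\<in>\<Union>M. {a\<in>F. x \<in> a})"
      by blast
    have "disjnt a b" if "b \<in> M" for b
      using a that unfolding disjnt_def by blast
    then have "insert a M \<in> ?D"
      using M a(1) by (auto simp: pairwise_insert disjnt_sym)
    then have "insert a M = M" using max subset_insertI by metis
    then have "a \<in> M" by blast
    then show False using a ne by auto
  qed
  then show ?thesis using M by blast
qed

lemma delta_system_insert:
  assumes "\<forall>a\<in>G. x \<in> a" "delta_system ((\<lambda>a. a - {x}) ` G) R"
  shows "delta_system G (insert x R)"
  unfolding delta_system_def
proof (intro ballI impI)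
  fix a b assume ab: "a \<in> G" "b \<in> G" "a \<noteq> b"
  then have "a - {x} \<noteq> b - {x}" using assms(1) by (metis insert_Diff)
  then have "(a - {x}) \<inter> (b - {x}) = R" using ab assms(2) by (simp add: delta_system_def)
  then show "a \<inter> b = insert x R" using ab assms(1) by auto
qed

lemma delta_system_lemma_uniform_card:
  assumes "uncountable F" "\<forall>a\<in>F. finite a \<and> card a = n"
  shows "\<exists>G\<subseteq>F. uncountable G \<and> (\<exists>R. finite R \<and> delta_system G R)"
  using assms
proof (induction n arbitrary: F)
  case 0
  then have "F \<subseteq> {{}}" by auto
  then have "countable F" by (rule countable_subset) simp
  with "0.prems"(1) show ?case by blast
next
  case (Suc n)
  show ?case
  proof (cases "\<exists>x. uncountable {a\<in>F. x \<in> a}")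
    case True
    then obtain x where x: "uncountable {a\<in>F. x \<in> a}" by blast
    let ?Fx = "{a\<in>F. x \<in> a}"
    have "inj_on (\<lambda>a. a - {x}) ?Fx"
      unfolding inj_on_def by (metis (no_types, lifting) insert_Diff mem_Collect_eq)
    then have "uncountable ((\<lambda>a. a - {x}) ` ?Fx)"
      using x countable_image_inj_on by blast
    moreover have "\<forall>a\<in>(\<lambda>a. a - {x}) ` ?Fx. finite a \<and> card a = n"
      using Suc.prems(2) by auto
    ultimately obtain G' R where G': "G' \<subseteq> (\<lambda>a. a - {x}) ` ?Fx" "uncountable G'"
      "finite R" "delta_system G' R"
      using Suc.IH by meson
    obtain G where G: "G \<subseteq> ?Fx" "G' = (\<lambda>a. a - {x}) ` G"
      using G'(1) by (rule subset_imageE)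
    have "uncountable G"
      using G(2) G'(2) countable_image by blast
    moreover have "delta_system G (insert x R)"
      using G G'(4) by (intro delta_system_insert) auto
    moreover have "G \<subseteq> F" "finite (insert x R)" using G(1) G'(3) by auto
    ultimately show ?thesis by blast
  next
    case False
    have "\<forall>a\<in>F. finite a \<and> a \<noteq> {}" using Suc.prems(2) by auto
    moreover have "\<forall>x. countable {a\<in>F. x \<in> a}" using False by blast
    ultimately obtain G where "G \<subseteq> F" "uncountable G" "pairwise disjnt G"
      using uncountable_disjoint_subfamily[OF Suc.prems(1)] by blast
    moreover have "delta_system G {}"
      using \<open>pairwise disjnt G\<close> by (auto simp: delta_system_def pairwise_def disjnt_def)
    ultimately show ?thesis by blast
  qed
qed

lemma delta_system_lemma:
  assumes "uncountable F" "\<forall>a\<in>F. finite a"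
  shows "\<exists>G\<subseteq>F. uncountable G \<and> (\<exists>R. finite R \<and> delta_system G R)"
proof -
  obtain n where n: "uncountable {a\<in>F. card a = n}"
    using uncountable_fiber[OF assms(1), of card] by auto
  have "\<forall>a\<in>{a\<in>F. card a = n}. finite a \<and> card a = n" using assms(2) by blast
  from delta_system_lemma_uniform_card[OF n this] show ?thesis by blast
qed

section \<open>Finite partial conflict free colorings\<close>

definition partial_cf_colorings :: "'a set \<Rightarrow> 'a set set \<Rightarrow> ('a \<times> 'c) set set" where
  "partial_cf_colorings X \<A> = {p. finite p \<and> single_valued p \<and> Domain p \<subseteq> X \<and>
     (\<forall>A\<in>\<A>. A \<subseteq> Domain p \<longrightarrow> (\<exists>\<zeta>. card {x\<in>A. (x, \<zeta>) \<in> p} = 1))}"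

definition heavy_hull :: "'a set set \<Rightarrow> nat \<Rightarrow> 'a set \<Rightarrow> 'a set" where
  "heavy_hull \<A> k D = D \<union> \<Union>{A\<in>\<A>. k < card (A \<inter> D)}"

lemma almost_disjoint_finite_supersets:
  assumes ad: "almost_disjoint \<mu> (UNIV :: nat set) \<A>" and F: "\<mu> \<le> card F"
  shows "finite {A\<in>\<A>. F \<subseteq> A}"
proof (rule ccontr)
  assume "infinite {A\<in>\<A>. F \<subseteq> A}"
  then obtain f :: "nat \<Rightarrow> 'a set" where f: "inj f" "range f \<subseteq> {A\<in>\<A>. F \<subseteq> A}"
    using infinite_countable_subset by blast
  have "range f \<approx> (UNIV :: nat set)"
    using f(1) by (rule inj_on_image_eqpoll_self)
  moreover have "range f \<subseteq> \<A>" using f(2) by blast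
  ultimately have fin: "finite (\<Inter>(range f))" and small: "card (\<Inter>(range f)) < \<mu>"
    using ad unfolding almost_disjoint_def by blast+
  have "F \<subseteq> \<Inter>(range f)" using f(2) by blast
  then have "card F \<le> card (\<Inter>(range f))" using fin by (rule card_mono[rotated])
  then show False using F small by linarith
qed

lemma finite_heavy_sets:
  assumes ad: "almost_disjoint (k + 1) (UNIV :: nat set) \<A>" and D: "finite D"
  shows "finite {A\<in>\<A>. k < card (A \<inter> D)}"
proof -
  let ?Fs = "{F. F \<subseteq> D \<and> card F = k + 1}"
  have "{A\<in>\<A>. k < card (A \<inter> D)} \<subseteq> (\<Union>F\<in>?Fs. {A\<in>\<A>. F \<subseteq> A})"
  proof
    fix A assume A: "A \<in> {A\<in>\<A>. k < card (A \<inter> D)}"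
    then obtain F where "F \<subseteq> A \<inter> D" "card F = k + 1"
      using obtain_subset_with_card_n[of "k + 1" "A \<inter> D"] by force
    then show "A \<in> (\<Union>F\<in>?Fs. {A\<in>\<A>. F \<subseteq> A})" using A by blast
  qed
  moreover have "finite (\<Union>F\<in>?Fs. {A\<in>\<A>. F \<subseteq> A})"
  proof (rule finite_UN_I)
    show "finite ?Fs" using D by simp
    show "finite {A\<in>\<A>. F \<subseteq> A}" if "F \<in> ?Fs" for F
      using almost_disjoint_finite_supersets[OF ad] that by simp
  qed
  ultimately show ?thesis by (rule finite_subset)
qed

lemma finite_heavy_hull:
  assumes "almost_disjoint (k + 1) (UNIV :: nat set) \<A>" "\<forall>A\<in>\<A>. finite A" "finite D"
  shows "finite (heavy_hull \<A> k D)"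
  using finite_heavy_sets[OF assms(1,3)] assms(2,3) by (auto simp: heavy_hull_def)

lemma single_valued_Un:
  assumes "single_valued p" "single_valued q" "p \<inter> (Domain q \<times> UNIV) \<subseteq> q"
  shows "single_valued (p \<union> q)"
proof (rule single_valuedI)
  fix x c d assume xc: "(x, c) \<in> p \<union> q" and xd: "(x, d) \<in> p \<union> q"
  have cross: "(x, c') \<in> q" if "(x, c') \<in> p" "(x, d') \<in> q" for c' d'
    using that assms(3) by blast
  from xc xd show "c = d"
    using cross[of c d] cross[of d c] assms(1,2) unfolding single_valued_def by blast
qed

lemma agreement_on_heavy_hull:
  assumes R: "heavy_hull \<A> k (Domain p) \<inter> heavy_hull \<A> k (Domain q) \<subseteq> R"
    and agree: "p \<inter> (R \<times> UNIV) = q \<inter> (R \<times> UNIV)"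
  shows "q \<inter> (heavy_hull \<A> k (Domain p) \<times> UNIV) \<subseteq> p"
proof clarify
  fix x c assume xc: "(x, c) \<in> q" "x \<in> heavy_hull \<A> k (Domain p)"
  then have "x \<in> heavy_hull \<A> k (Domain q)" by (auto simp: heavy_hull_def)
  then have "(x, c) \<in> q \<inter> (R \<times> UNIV)" using xc R by blast
  then show "(x, c) \<in> p" using agree by (metis IntD1)
qed

lemma unique_color_Un:
  assumes p: "p \<in> partial_cf_colorings X \<A>" and sv: "single_valued (p \<union> q)"
    and agree: "q \<inter> (heavy_hull \<A> k (Domain p) \<times> UNIV) \<subseteq> p"
    and A: "A \<in> \<A>" "A \<subseteq> Domain (p \<union> q)" "k < card (A \<inter> Domain p)"
  shows "\<exists>\<zeta>. card {x\<in>A. (x, \<zeta>) \<in> p \<union> q} = 1"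
proof -
  have "A \<subseteq> Domain p"
  proof
    fix x assume x: "x \<in> A"
    then obtain c where c: "(x, c) \<in> p \<union> q" using A(2) by blast
    have "x \<in> heavy_hull \<A> k (Domain p)" using x A(1,3) by (auto simp: heavy_hull_def)
    then have "(x, c) \<in> p" using c agree by blast
    then show "x \<in> Domain p" by blast
  qed
  moreover have "\<forall>A\<in>\<A>. A \<subseteq> Domain p \<longrightarrow> (\<exists>\<zeta>. card {x\<in>A. (x, \<zeta>) \<in> p} = 1)"
    using p by (simp add: partial_cf_colorings_def)
  ultimately obtain \<zeta> where \<zeta>: "card {x\<in>A. (x, \<zeta>) \<in> p} = 1"
    using A(1) by blast
  have "{x\<in>A. (x, \<zeta>) \<in> p \<union> q} = {x\<in>A. (x, \<zeta>) \<in> p}"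
  proof (intro equalityI subsetI)
    fix x assume x: "x \<in> {x\<in>A. (x, \<zeta>) \<in> p \<union> q}"
    then obtain c where c: "(x, c) \<in> p" using \<open>A \<subseteq> Domain p\<close> by blast
    then have "(x, c) \<in> p \<union> q" by simp
    moreover have "(x, \<zeta>) \<in> p \<union> q" using x by simp
    ultimately have "c = \<zeta>" by (rule single_valuedD[OF sv])
    then show "x \<in> {x\<in>A. (x, \<zeta>) \<in> p}" using x c by simp
  qed auto
  then have "card {x\<in>A. (x, \<zeta>) \<in> p \<union> q} = 1" using \<zeta> by simp
  then show ?thesis ..
qed

lemma partial_cf_colorings_Un:
  assumes p: "p \<in> partial_cf_colorings X \<A>" and q: "q \<in> partial_cf_colorings X \<A>"
    and big: "\<forall>A\<in>\<A>. 2 * k < card A"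
    and R: "heavy_hull \<A> k (Domain p) \<inter> heavy_hull \<A> k (Domain q) \<subseteq> R"
    and agree: "p \<inter> (R \<times> UNIV) = q \<inter> (R \<times> UNIV)"
  shows "p \<union> q \<in> partial_cf_colorings X \<A>"
proof -
  have q_in_p: "q \<inter> (heavy_hull \<A> k (Domain p) \<times> UNIV) \<subseteq> p"
    using R agree by (rule agreement_on_heavy_hull)
  have p_in_q: "p \<inter> (heavy_hull \<A> k (Domain q) \<times> UNIV) \<subseteq> q"
    using agreement_on_heavy_hull[of \<A> k q p R] R agree by (simp add: Int_commute)
  have "Domain q \<subseteq> heavy_hull \<A> k (Domain q)" by (simp add: heavy_hull_def)
  then have sv: "single_valued (p \<union> q)"
    using p q p_in_q by (intro single_valued_Un) (auto simp: partial_cf_colorings_def)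
  have "\<exists>\<zeta>. card {x\<in>A. (x, \<zeta>) \<in> p \<union> q} = 1" if A: "A \<in> \<A>" "A \<subseteq> Domain (p \<union> q)" for A
  proof -
    have "A = (A \<inter> Domain p) \<union> (A \<inter> Domain q)" using A(2) by auto
    then have "card A \<le> card (A \<inter> Domain p) + card (A \<inter> Domain q)"
      by (metis card_Un_le)
    then consider "k < card (A \<inter> Domain p)" | "k < card (A \<inter> Domain q)"
      using big A(1) by fastforce
    then show ?thesis
    proof cases
      case 1
      then show ?thesis using unique_color_Un[OF p sv q_in_p A] by blast
    next
      case 2
      have "single_valued (q \<union> p)" "A \<subseteq> Domain (q \<union> p)"
        using sv A(2) by (simp_all add: Un_commute)
      from unique_color_Un[OF q this(1) p_in_q A(1) this(2) 2] show ?thesis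
        by (simp add: Un_commute)
    qed
  qed
  moreover have "finite (p \<union> q)" "Domain (p \<union> q) \<subseteq> X"
    using p q by (auto simp: partial_cf_colorings_def)
  ultimately show ?thesis using sv by (simp add: partial_cf_colorings_def)
qed

section \<open>Property K\<close>

lemma countable_finite_relations:
  assumes "finite D"
  shows "countable {p. finite p \<and> p \<subseteq> D \<times> (UNIV :: 'c::countable set)}"
  using assms by (intro countable_Collect_finite_subset countable_SIGMA) (auto intro: countable_finite)

lemma uncountable_image_supports:
  fixes S :: "('a \<times> 'c::countable) set set"
  assumes S: "uncountable S" and H: "\<forall>p\<in>S. finite p \<and> finite (H p) \<and> Domain p \<subseteq> H p"
  shows "uncountable (H ` S)"
proof
  assume "countable (H ` S)"
  then obtain e where e: "uncountable {p\<in>S. H p = e}"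
    using uncountable_fiber[OF S] by blast
  then have "{p\<in>S. H p = e} \<noteq> {}" by (metis countable_empty)
  then obtain p0 where "p0 \<in> S" "H p0 = e" by blast
  then have "finite e" using H by blast
  have "{p\<in>S. H p = e} \<subseteq> {p. finite p \<and> p \<subseteq> e \<times> UNIV}"
  proof
    fix p assume "p \<in> {p\<in>S. H p = e}"
    moreover have "p \<subseteq> Domain p \<times> UNIV" by auto
    ultimately show "p \<in> {p. finite p \<and> p \<subseteq> e \<times> UNIV}" using H by blast
  qed
  then have "countable {p\<in>S. H p = e}"
    using countable_finite_relations[OF \<open>finite e\<close>] by (rule countable_subset)
  with e show False by simp
qed

lemma uncountable_subfamily_agreeing_on_root:
  fixes S :: "('a \<times> 'c::countable) set set"
  assumes S: "uncountable S" and H: "\<forall>p\<in>S. finite p \<and> finite (H p) \<and> Domain p \<subseteq> H p"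
  obtains T R where "T \<subseteq> S" "uncountable T"
    and "\<And>p q. p \<in> T \<Longrightarrow> q \<in> T \<Longrightarrow> p \<noteq> q \<Longrightarrow> H p \<inter> H q = R"
    and "\<And>p q. p \<in> T \<Longrightarrow> q \<in> T \<Longrightarrow> p \<inter> (R \<times> UNIV) = q \<inter> (R \<times> UNIV)"
proof -
  have "\<forall>e\<in>H ` S. finite e" using H by blast
  with uncountable_image_supports[OF S H]
  obtain \<G> R where \<G>: "\<G> \<subseteq> H ` S" "uncountable \<G>" and R: "finite R" "delta_system \<G> R"
    using delta_system_lemma by meson
  then obtain T0 where T0: "T0 \<subseteq> S" "inj_on H T0" "\<G> = H ` T0"
    using subset_image_inj by meson
  have "uncountable T0" using T0(3) \<G>(2) by auto
  have root: "H p \<inter> H q = R" if "p \<in> T0" "q \<in> T0" "p \<noteq> q" for p q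
  proof -
    have "H p \<noteq> H q" using T0(2) that inj_on_contraD by metis
    then show ?thesis using R(2) T0(3) that by (simp add: delta_system_def)
  qed
  have "(\<lambda>p. p \<inter> (R \<times> UNIV)) ` T0 \<subseteq> {p. finite p \<and> p \<subseteq> R \<times> UNIV}"
    using H T0(1) by auto
  then have "countable ((\<lambda>p. p \<inter> (R \<times> UNIV)) ` T0)"
    using countable_finite_relations[OF R(1)] by (rule countable_subset)
  then obtain c where c: "uncountable {p\<in>T0. p \<inter> (R \<times> UNIV) = c}"
    using uncountable_fiber[OF \<open>uncountable T0\<close>] by blast
  show thesis
  proof (rule that)
    show "{p\<in>T0. p \<inter> (R \<times> UNIV) = c} \<subseteq> S" using T0(1) by blast
  qed (use c root in auto)
qed

lemma property_K_partial_cf_colorings: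
  assumes ad: "almost_disjoint (k + 1) (UNIV :: nat set) \<A>" and big: "\<forall>A\<in>\<A>. 2 * k < card A"
  shows "property_K (partial_cf_colorings X \<A> :: ('a \<times> 'c::countable) set set) (\<lambda>q p. p \<subseteq> q)"
  unfolding property_K_def
proof (intro allI impI)
  fix S :: "('a \<times> 'c) set set"
  assume S: "S \<subseteq> partial_cf_colorings X \<A>" "uncountable S"
  let ?H = "\<lambda>p :: ('a \<times> 'c) set. heavy_hull \<A> k (Domain p)"
  have finite_\<A>: "\<forall>A\<in>\<A>. finite A" using big by (metis card.infinite not_less_zero)
  have hulls: "\<forall>p\<in>S. finite p \<and> finite (?H p) \<and> Domain p \<subseteq> ?H p"
  proof
    fix p assume "p \<in> S"
    then have "finite p" using S(1) by (simp add: partial_cf_colorings_def subset_iff)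
    then show "finite p \<and> finite (?H p) \<and> Domain p \<subseteq> ?H p"
      using finite_heavy_hull[OF ad finite_\<A>] by (simp add: heavy_hull_def finite_Domain)
  qed
  obtain T R where T: "T \<subseteq> S" "uncountable T"
    and root: "\<And>p q. p \<in> T \<Longrightarrow> q \<in> T \<Longrightarrow> p \<noteq> q \<Longrightarrow> ?H p \<inter> ?H q = R"
    and agree: "\<And>p q. p \<in> T \<Longrightarrow> q \<in> T \<Longrightarrow> p \<inter> (R \<times> UNIV) = q \<inter> (R \<times> UNIV)"
    using uncountable_subfamily_agreeing_on_root[OF S(2) hulls] by metis
  have "p \<union> q \<in> partial_cf_colorings X \<A>" if "p \<in> T" "q \<in> T" for p q
  proof (cases "p = q")
    case True
    then show ?thesis using that T(1) S(1) by auto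
  next
    case False
    then have "?H p \<inter> ?H q \<subseteq> R" using root that by blast
    moreover have "p \<in> partial_cf_colorings X \<A>" "q \<in> partial_cf_colorings X \<A>"
      using that T(1) S(1) by blast+
    ultimately show ?thesis using partial_cf_colorings_Un big agree[OF that] by blast
  qed
  then have "\<forall>p\<in>T. \<forall>q\<in>T. compatible (partial_cf_colorings X \<A>) (\<lambda>q p. p \<subseteq> q) p q"
    unfolding compatible_def by blast
  with T show "\<exists>T\<subseteq>S. uncountable T \<and> (\<forall>p\<in>T. \<forall>q\<in>T. compatible (partial_cf_colorings X \<A>) (\<lambda>q p. p \<subseteq> q) p q)"
    by blast
qed

section \<open>Generic filters\<close>

lemma insert_fresh_color_partial_cf_colorings:
  assumes p: "p \<in> partial_cf_colorings X \<A>" and x: "x \<in> X" "x \<notin> Domain p"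
    and c: "c \<notin> Range p"
  shows "insert (x, c) p \<in> partial_cf_colorings X \<A>"
proof -
  have fin: "finite p" and sv: "single_valued p" and dom: "Domain p \<subseteq> X"
    and cf: "\<And>A. A \<in> \<A> \<Longrightarrow> A \<subseteq> Domain p \<Longrightarrow> \<exists>\<zeta>. card {y\<in>A. (y, \<zeta>) \<in> p} = 1"
    using p by (auto simp: partial_cf_colorings_def)
  let ?q = "insert (x, c) p"
  have "\<exists>\<zeta>. card {y\<in>A. (y, \<zeta>) \<in> ?q} = 1" if A: "A \<in> \<A>" "A \<subseteq> Domain ?q" for A
  proof (cases "x \<in> A")
    case True
    have "{y\<in>A. (y, c) \<in> ?q} = {x}" using True c by auto
    then have "card {y\<in>A. (y, c) \<in> ?q} = 1" by simp
    then show ?thesis ..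
  next
    case False
    then have "A \<subseteq> Domain p" using A(2) by auto
    then obtain \<zeta> where "card {y\<in>A. (y, \<zeta>) \<in> p} = 1" using cf A(1) by blast
    moreover have "{y\<in>A. (y, \<zeta>) \<in> ?q} = {y\<in>A. (y, \<zeta>) \<in> p}" using False by auto
    ultimately have "card {y\<in>A. (y, \<zeta>) \<in> ?q} = 1" by simp
    then show ?thesis ..
  qed
  moreover have "single_valued ?q" using sv x(2) by (auto simp: single_valued_def)
  ultimately show ?thesis using fin dom x(1) by (simp add: partial_cf_colorings_def)
qed

lemma dense_in_partial_cf_colorings_Domain:
  assumes inf: "infinite (UNIV :: 'c set)" and x: "x \<in> X"
  shows "dense_in (partial_cf_colorings X \<A> :: ('a \<times> 'c) set set) (\<lambda>q p. p \<subseteq> q)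
           {p\<in>partial_cf_colorings X \<A>. x \<in> Domain p}"
  unfolding dense_in_def
proof (intro conjI ballI)
  fix p :: "('a \<times> 'c) set" assume p: "p \<in> partial_cf_colorings X \<A>"
  show "\<exists>q\<in>{p\<in>partial_cf_colorings X \<A>. x \<in> Domain p}. p \<subseteq> q"
  proof (cases "x \<in> Domain p")
    case True
    then show ?thesis using p by blast
  next
    case False
    have "finite (Range p)" using p by (simp add: partial_cf_colorings_def finite_Range)
    then obtain c :: 'c where "c \<notin> Range p" using ex_new_if_finite[OF inf] by blast
    with p x False have "insert (x, c) p \<in> partial_cf_colorings X \<A>"
      by (rule insert_fresh_color_partial_cf_colorings)
    then show ?thesis by (intro bexI[of _ "insert (x, c) p"]) auto
  qed
qed blast

lemma single_valued_Union_directed: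
  assumes "\<forall>r\<in>G. single_valued r" and directed: "\<forall>p\<in>G. \<forall>q\<in>G. \<exists>r\<in>G. p \<subseteq> r \<and> q \<subseteq> r"
  shows "single_valued (\<Union>G)"
proof (rule single_valuedI)
  fix x c d assume "(x, c) \<in> \<Union>G" "(x, d) \<in> \<Union>G"
  then obtain p q where p: "p \<in> G" "(x, c) \<in> p" and q: "q \<in> G" "(x, d) \<in> q"
    by blast
  then obtain r where r: "r \<in> G" "p \<subseteq> r" "q \<subseteq> r" using directed by blast
  then have "single_valued r" using assms(1) by blast
  moreover have "(x, c) \<in> r" "(x, d) \<in> r" using p(2) q(2) r(2,3) by blast+
  ultimately show "c = d" by (rule single_valuedD)
qed

lemma finite_subset_Domain_directed:
  assumes "G \<noteq> {}" and directed: "\<forall>p\<in>G. \<forall>q\<in>G. \<exists>r\<in>G. p \<subseteq> r \<and> q \<subseteq> r"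
    and X: "\<forall>x\<in>X. \<exists>p\<in>G. x \<in> Domain p" and F: "finite F" "F \<subseteq> X"
  shows "\<exists>r\<in>G. F \<subseteq> Domain r"
  using F
proof (induction F rule: finite_induct)
  case empty
  then show ?case using \<open>G \<noteq> {}\<close> by blast
next
  case (insert x F)
  then obtain p where p: "p \<in> G" "F \<subseteq> Domain p" by blast
  obtain q where q: "q \<in> G" "x \<in> Domain q" using X insert.prems by blast
  obtain r where r: "r \<in> G" "p \<subseteq> r" "q \<subseteq> r" using directed p(1) q(1) by blast
  then have "insert x F \<subseteq> Domain r" using p(2) q(2) by blast
  then show ?case using r(1) by blast
qed

lemma cf_colorable_of_generic_filter:
  fixes G :: "('a \<times> 'c) set set"
  assumes G: "filter_in (partial_cf_colorings X \<A>) (\<lambda>q p. p \<subseteq> q) G"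
    and generic: "\<forall>x\<in>X. G \<inter> {p\<in>partial_cf_colorings X \<A>. x \<in> Domain p} \<noteq> {}"
    and \<A>: "\<forall>A\<in>\<A>. finite A \<and> A \<subseteq> X"
  shows "cf_colorable \<A> (UNIV :: 'c set)"
proof -
  have GP: "G \<subseteq> partial_cf_colorings X \<A>" and "G \<noteq> {}"
    and directed: "\<forall>p\<in>G. \<forall>q\<in>G. \<exists>r\<in>G. p \<subseteq> r \<and> q \<subseteq> r"
    using G by (simp_all add: filter_in_def)
  have "\<forall>r\<in>G. single_valued r" using GP unfolding partial_cf_colorings_def by blast
  then have sv: "single_valued (\<Union>G)" using directed by (rule single_valued_Union_directed)
  have "\<forall>x\<in>X. \<exists>p\<in>G. x \<in> Domain p" using generic by auto
  note cover = finite_subset_Domain_directed[OF \<open>G \<noteq> {}\<close> directed this]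
  define f where "f y = (SOME c. (y, c) \<in> \<Union>G)" for y
  have f: "f y = c" if "(y, c) \<in> r" "r \<in> G" for y c r
  proof -
    have yc: "(y, c) \<in> \<Union>G" using that by blast
    then have "(y, f y) \<in> \<Union>G" unfolding f_def by (rule someI)
    then show ?thesis using yc by (rule single_valuedD[OF sv])
  qed
  have "\<exists>\<zeta>. card (A \<inter> f -` {\<zeta>}) = 1" if A: "A \<in> \<A>" for A
  proof -
    obtain r where r: "r \<in> G" "A \<subseteq> Domain r" using cover[of A] \<A> A by blast
    then have "r \<in> partial_cf_colorings X \<A>" using GP by blast
    then have "\<forall>A\<in>\<A>. A \<subseteq> Domain r \<longrightarrow> (\<exists>\<zeta>. card {x\<in>A. (x, \<zeta>) \<in> r} = 1)"
      by (simp add: partial_cf_colorings_def)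
    then obtain \<zeta> where \<zeta>: "card {x\<in>A. (x, \<zeta>) \<in> r} = 1" using A r(2) by blast
    have "A \<inter> f -` {\<zeta>} = {x\<in>A. (x, \<zeta>) \<in> r}"
    proof (intro equalityI subsetI)
      fix x assume x: "x \<in> A \<inter> f -` {\<zeta>}"
      then obtain c where c: "(x, c) \<in> r" using r(2) by blast
      then have "c = \<zeta>" using f[OF c r(1)] x by simp
      then show "x \<in> {x\<in>A. (x, \<zeta>) \<in> r}" using x c by simp
    next
      fix x assume "x \<in> {x\<in>A. (x, \<zeta>) \<in> r}"
      then show "x \<in> A \<inter> f -` {\<zeta>}" using f[of x \<zeta> r] r(1) by simp
    qed
    then have "card (A \<inter> f -` {\<zeta>}) = 1" using \<zeta> by simp
    then show ?thesis ..
  qed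
  then have "cf_coloring \<A> f UNIV" unfolding cf_coloring_def by blast
  then show ?thesis unfolding cf_colorable_def by blast
qed

theorem theorem2p2:
  fixes X :: "'a set" and k :: nat and \<A> :: "'a set set"
  assumes MA: "MA_K TYPE(('a \<times> nat) set) X"
    and fin: "\<forall>A\<in>\<A>. finite A \<and> A \<subseteq> X"
    and ad: "almost_disjoint (k + 1) (UNIV :: nat set) \<A>"
    and big: "\<forall>A\<in>\<A>. card A > 2 * k"
  shows "cf_colorable \<A> (UNIV :: nat set)"
proof -
  let ?P = "partial_cf_colorings X \<A> :: ('a \<times> nat) set set"
  define \<D> where "\<D> = (\<lambda>x. {p\<in>?P. x \<in> Domain p}) ` X"
  have "\<forall>A\<in>\<A>. A \<noteq> {}" using big by auto
  then have "{} \<in> ?P" by (auto simp: partial_cf_colorings_def)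
  moreover have "partial_order_on' ?P (\<lambda>q p. p \<subseteq> q)"
    unfolding partial_order_on'_def by blast
  moreover have "property_K ?P (\<lambda>q p. p \<subseteq> q)"
    using ad big by (rule property_K_partial_cf_colorings)
  moreover have "\<D> \<lesssim> X" unfolding \<D>_def by (rule image_lepoll)
  moreover have "\<forall>D\<in>\<D>. dense_in ?P (\<lambda>q p. p \<subseteq> q) D"
    by (simp add: \<D>_def dense_in_partial_cf_colorings_Domain[OF infinite_UNIV_nat])
  ultimately obtain G where G: "filter_in ?P (\<lambda>q p. p \<subseteq> q) G" and "\<forall>D\<in>\<D>. G \<inter> D \<noteq> {}"
    using MA[unfolded MA_K_def, rule_format, of ?P "\<lambda>q p. p \<subseteq> q" \<D>] by blast
  then have "\<forall>x\<in>X. G \<inter> {p\<in>?P. x \<in> Domain p} \<noteq> {}" by (simp add: \<D>_def)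
  from G this fin show ?thesis by (rule cf_colorable_of_generic_filter)
qed

end
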